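(* Let $\mathbf a=(a_0,a_1,\ldots)$ be an integer sequence, and let $\mathbf m$ and $\mathbf b$ be its double-ox middle and transformed sequences. Then the exponential generating functions $\mathcal A(x)=\sum a_nx^n/n!$, $\mathcal M(x)=\sum m_nx^n/n!$, $\mathcal B(x)=\sum b_nx^n/n!$ satisfy, as formal power series, $$\mathcal M(x)=\frac{1}{\cos x-\sin x}\,\mathcal A(x),\qquad \mathcal B(x)=\frac{\cos x+\sin x}{\cos x-\sin x}\,\mathcal A(x).$$
   Context: Double-ox transform: given $\mathbf a$, define two triangular arrays $L_{n,k}$, $R_{n,k}$ ($0\le k\le n$) as follows. For $n\ge k\ge0$: $L_{n+1,k+1}=L_{n+1,k}+L_{n,n-k}$ and $R_{n+1,k+1}=R_{n+1,k}+R_{n,n-k}$. The first entries of the rows are: $L_{2i,0}=a_{2i}$, $R_{2i+1,0}=a_{2i+1}$, $R_{2i,0}=L_{2i,2i}$, $L_{2i+1,0}=R_{2i+1,2i+1}$ for $i\ge0$ (so rows are computed in the order $L$ row $0$, $R$ row $0$, $R$ row $1$, $L$ row $1$, $L$ row $2$, $R$ row $2$, \dots). Then the middle sequence is $m_{2i}=L_{2i,2i}$, $m_{2i+1}=R_{2i+1,2i+1}$, and the transformed sequence is $b_{2i}=R_{2i,2i}$, $b_{2i+1}=L_{2i+1,2i+1}$. (For example, $\mathbf a=(1,1,1,\ldots)$ gives $\mathbf b=(1,3,9,35,177,\ldots)$.) *)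

theory Defs
  imports "HOL-Computational_Algebra.Formal_Power_Series"
begin

text \<open>Row n+1 of a triangular array, given its first entry s and the previous row prev (row n):
  row(0) = s, row(k+1) = row(k) + prev(n-k).\<close>
fun next_row :: "int \<Rightarrow> (nat \<Rightarrow> int) \<Rightarrow> nat \<Rightarrow> nat \<Rightarrow> int" where
  "next_row s prev n 0 = s"
| "next_row s prev n (Suc k) = next_row s prev n k + prev (n - k)"

text \<open>ox_rows a n = (row n of L, row n of R), computed in the order
  L0, R0, R1, L1, L2, R2, ...\<close>
fun ox_rows :: "(nat \<Rightarrow> int) \<Rightarrow> nat \<Rightarrow> (nat \<Rightarrow> int) \<times> (nat \<Rightarrow> int)" where
  "ox_rows a 0 = ((\<lambda>k. a 0), (\<lambda>k. a 0))"
| "ox_rows a (Suc n) =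
     (let (l, r) = ox_rows a n in
      if even (Suc n) then
        (let l' = next_row (a (Suc n)) l n in (l', next_row (l' (Suc n)) r n))
      else
        (let r' = next_row (a (Suc n)) r n in (next_row (r' (Suc n)) l n, r')))"

definition ox_L :: "(nat \<Rightarrow> int) \<Rightarrow> nat \<Rightarrow> nat \<Rightarrow> int" where
  "ox_L a n k = fst (ox_rows a n) k"

definition ox_R :: "(nat \<Rightarrow> int) \<Rightarrow> nat \<Rightarrow> nat \<Rightarrow> int" where
  "ox_R a n k = snd (ox_rows a n) k"

definition ox_middle :: "(nat \<Rightarrow> int) \<Rightarrow> nat \<Rightarrow> int" where
  "ox_middle a n = (if even n then ox_L a n n else ox_R a n n)"

definition ox_transform :: "(nat \<Rightarrow> int) \<Rightarrow> nat \<Rightarrow> int" where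
  "ox_transform a n = (if even n then ox_R a n n else ox_L a n n)"

definition egf :: "(nat \<Rightarrow> int) \<Rightarrow> real fps" where
  "egf a = Abs_fps (\<lambda>n. of_int (a n) / fact n)"

end

theory Submission
  imports Defs
begin

(* Each of the arrays L and R obeys the boustrophedon recurrence T(n+1,k+1) = T(n+1,k) + T(n,n-k),
   so by the classical boustrophedon theorem the EGF of its diagonal is (1 + sin x) / cos x times
   the EGF of its first column. In the double ox transform the first column of L (of R) takes the
   even (odd) coefficients from a and the others from the diagonal of R (of L). Splitting these
   two EGF identities into even and odd parts, using that cos is even and sin is odd, gives four
   linear equations; adding them in pairs yields M (cos - sin) = A and B cos = M + A sin, and
   cos^2 + sin^2 = 1 turns the latter into B (cos - sin) = (cos + sin) A. *)

unbundle fps_syntax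

definition egf_of :: "(nat \<Rightarrow> 'a::field_char_0) \<Rightarrow> 'a fps" where
  "egf_of f = Abs_fps (\<lambda>n. f n / fact n)"

definition egf_coeff :: "'a::field_char_0 fps \<Rightarrow> nat \<Rightarrow> 'a" where
  "egf_coeff F n = fact n * F $ n"

lemma egf_coeff_egf_of [simp]: "egf_coeff (egf_of f) = f"
  by (simp add: egf_coeff_def egf_of_def fun_eq_iff)

lemma egf_of_egf_coeff [simp]: "egf_of (egf_coeff F) = F"
  by (simp add: egf_coeff_def egf_of_def fps_eq_iff)

lemma egf_coeff_Suc: "egf_coeff F (Suc n) = egf_coeff (fps_deriv F) n"
  by (simp add: egf_coeff_def algebra_simps)

lemma egf_coeff_diff: "egf_coeff (F - G) n = egf_coeff F n - egf_coeff G n"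
  by (simp add: egf_coeff_def algebra_simps)

lemma egf_coeff_mult:
  "egf_coeff (F * G) n = (\<Sum>j\<le>n. of_nat (n choose j) * egf_coeff F j * egf_coeff G (n - j))"
proof -
  have "egf_coeff (F * G) n = (\<Sum>j\<le>n. fact n * (F $ j * G $ (n - j)))"
    by (simp add: egf_coeff_def fps_mult_nth atLeast0AtMost sum_distrib_left)
  also have "\<dots> = (\<Sum>j\<le>n. of_nat (n choose j) * egf_coeff F j * egf_coeff G (n - j))"
    by (rule sum.cong) (auto simp: egf_coeff_def binomial_fact)
  finally show ?thesis .
qed

lemma egf_coeff_cos_Suc:
  "egf_coeff (fps_cos (1::'a::field_char_0)) (Suc n) = - egf_coeff (fps_sin 1) n"
  unfolding egf_coeff_Suc fps_cos_deriv by (simp add: egf_coeff_def)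

lemma egf_coeff_sin_Suc:
  "egf_coeff (fps_sin (1::'a::field_char_0)) (Suc n) = egf_coeff (fps_cos 1) n"
  by (simp add: egf_coeff_Suc fps_sin_deriv)

(* Entry k of row n of the boustrophedon array with first column p and diagonal q: the
   coefficient of x^k y^(n-k) / (k! (n-k)!) in cos x P(x + y) + sin x Q(x + y), where P and Q
   are the EGFs of p and q. *)
definition boustrophedon_closed ::
    "(nat \<Rightarrow> 'a::field_char_0) \<Rightarrow> (nat \<Rightarrow> 'a) \<Rightarrow> nat \<Rightarrow> nat \<Rightarrow> 'a" where
  "boustrophedon_closed p q n k =
     (\<Sum>j\<le>k. of_nat (k choose j) *
        (egf_coeff (fps_cos 1) j * p (n - j) + egf_coeff (fps_sin 1) j * q (n - j)))"

lemma boustrophedon_closed_0 [simp]: "boustrophedon_closed p q n 0 = p n"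
  by (simp add: boustrophedon_closed_def egf_coeff_def)

lemma boustrophedon_closed_uminus:
  "boustrophedon_closed (\<lambda>m. - p m) (\<lambda>m. - q m) n k = - boustrophedon_closed p q n k"
  by (simp add: boustrophedon_closed_def algebra_simps flip: sum_negf)

lemma boustrophedon_closed_Suc:
  "boustrophedon_closed p q (Suc n) (Suc k) =
     boustrophedon_closed p q (Suc n) k + boustrophedon_closed q (\<lambda>m. - p m) n k"
proof -
  define t where
    "t j = egf_coeff (fps_cos 1) j * p (Suc n - j) + egf_coeff (fps_sin 1) j * q (Suc n - j)" for j
  have "boustrophedon_closed p q (Suc n) (Suc k) =
      (\<Sum>j\<le>Suc k. of_nat (k choose j) * t j) + (\<Sum>j\<le>k. of_nat (k choose j) * t (Suc j))"
    by (simp add: boustrophedon_closed_def t_def sum.atMost_Suc_shift sum.distrib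
        algebra_simps del: sum.atMost_Suc)
  also have "(\<Sum>j\<le>Suc k. of_nat (k choose j) * t j) = boustrophedon_closed p q (Suc n) k"
    by (simp add: boustrophedon_closed_def t_def)
  also have "(\<Sum>j\<le>k. of_nat (k choose j) * t (Suc j)) = boustrophedon_closed q (\<lambda>m. - p m) n k"
    by (simp add: boustrophedon_closed_def t_def egf_coeff_cos_Suc egf_coeff_sin_Suc algebra_simps)
  finally show ?thesis .
qed

(* Reading a row backwards exchanges (p, q) with (q, -p); combined with boustrophedon_closed_Suc
   this gives the boustrophedon recurrence. *)
lemma boustrophedon_closed_swap:
  assumes diag: "\<And>n. boustrophedon_closed q (\<lambda>m. - p m) n n = p n"
  shows "boustrophedon_closed p q (k + l) k = boustrophedon_closed q (\<lambda>m. - p m) (k + l) l"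
proof (induction "k + l" arbitrary: k l rule: less_induct)
  case less
  let ?T = "boustrophedon_closed p q" and ?T' = "boustrophedon_closed q (\<lambda>m. - p m)"
  show ?case
    using less
  proof (induction k arbitrary: l)
    case 0
    show ?case using diag[of l] by simp
  next
    case (Suc k l)
    have "?T (Suc k + l) (Suc k) = ?T (Suc (k + l)) k + ?T' (k + l) k"
      by (simp add: boustrophedon_closed_Suc)
    also have "?T (Suc (k + l)) k = ?T' (Suc (k + l)) (Suc l)"
      using Suc.IH[of "Suc l"] Suc.prems by simp
    also have "\<dots> = ?T' (Suc (k + l)) l - ?T (k + l) l"
      by (simp add: boustrophedon_closed_Suc boustrophedon_closed_uminus)
    also have "?T (k + l) l = ?T' (k + l) k"
      using Suc.prems[of l k] by (simp add: add.commute)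
    finally show ?case by simp
  qed
qed

lemma boustrophedon_closed_diag:
  assumes "egf_of q * fps_cos 1 = egf_of p * (1 + fps_sin 1)"
  shows "boustrophedon_closed q (\<lambda>m. - p m) n n = p n"
proof -
  have "fps_cos 1 * egf_of q - fps_sin 1 * egf_of p = egf_of p"
    using assms by (simp add: algebra_simps)
  then have "egf_coeff (fps_cos 1 * egf_of q - fps_sin 1 * egf_of p) n = p n"
    by simp
  then show ?thesis
    by (simp add: boustrophedon_closed_def egf_coeff_diff egf_coeff_mult
        algebra_simps flip: sum_subtractf)
qed

lemma boustrophedon_eq_closed:
  fixes T :: "nat \<Rightarrow> nat \<Rightarrow> 'a::field_char_0"
  assumes rec: "\<And>n k. k \<le> n \<Longrightarrow> T (Suc n) (Suc k) = T (Suc n) k + T n (n - k)"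
    and q: "egf_of q * fps_cos 1 = egf_of (\<lambda>n. T n 0) * (1 + fps_sin 1)"
  shows "k \<le> n \<Longrightarrow> T n k = boustrophedon_closed (\<lambda>n. T n 0) q n k"
proof (induction n arbitrary: k)
  case 0
  then show ?case by simp
next
  case (Suc n k)
  note row_n = Suc.IH
  note swap = boustrophedon_closed_swap[OF boustrophedon_closed_diag[OF q]]
  show ?case
    using Suc.prems
  proof (induction k)
    case (Suc k)
    then have "T n (n - k) = boustrophedon_closed q (\<lambda>m. - T m 0) n k"
      using row_n[of "n - k"] swap[of "n - k" k] by simp
    with Suc show ?case
      by (simp add: rec boustrophedon_closed_Suc)
  qed simp
qed

theorem boustrophedon_egf:
  fixes T :: "nat \<Rightarrow> nat \<Rightarrow> 'a::field_char_0"
  assumes rec: "\<And>n k. k \<le> n \<Longrightarrow> T (Suc n) (Suc k) = T (Suc n) k + T n (n - k)"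
  shows "egf_of (\<lambda>n. T n n) * fps_cos 1 = egf_of (\<lambda>n. T n 0) * (1 + fps_sin 1)"
proof -
  define Q where "Q = egf_of (\<lambda>n. T n 0) * (1 + fps_sin 1) / fps_cos 1"
  have Q: "egf_of (egf_coeff Q) * fps_cos 1 = egf_of (\<lambda>n. T n 0) * (1 + fps_sin 1)"
    by (simp add: Q_def)
  have "T n n = egf_coeff Q n" for n
    using boustrophedon_eq_closed[OF rec Q, of n n]
      boustrophedon_closed_swap[OF boustrophedon_closed_diag[OF Q], of n 0]
    by simp
  then show ?thesis
    using Q by simp
qed

definition fps_even_part :: "'a::semiring_0 fps \<Rightarrow> 'a fps" where
  "fps_even_part F = Abs_fps (\<lambda>n. if even n then F $ n else 0)"

definition fps_odd_part :: "'a::semiring_0 fps \<Rightarrow> 'a fps" where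
  "fps_odd_part F = Abs_fps (\<lambda>n. if odd n then F $ n else 0)"

lemma fps_even_part_plus_odd_part: "fps_even_part F + fps_odd_part F = F"
  by (simp add: fps_eq_iff fps_even_part_def fps_odd_part_def)

lemma fps_even_part_add: "fps_even_part (F + G) = fps_even_part F + fps_even_part G"
  and fps_odd_part_add: "fps_odd_part (F + G) = fps_odd_part F + fps_odd_part G"
  by (simp_all add: fps_eq_iff fps_even_part_def fps_odd_part_def)

lemma fps_even_part_idem [simp]: "fps_even_part (fps_even_part F) = fps_even_part F"
  and fps_odd_part_idem [simp]: "fps_odd_part (fps_odd_part F) = fps_odd_part F"
  and fps_even_part_odd_part [simp]: "fps_even_part (fps_odd_part F) = 0"
  and fps_odd_part_even_part [simp]: "fps_odd_part (fps_even_part F) = 0"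
  by (simp_all add: fps_eq_iff fps_even_part_def fps_odd_part_def)

lemma fps_even_part_mult:
  "fps_even_part (F * G) = fps_even_part F * fps_even_part G + fps_odd_part F * fps_odd_part G"
    (is "?L = ?R")
proof (rule fps_ext)
  show "?L $ n = ?R $ n" for n
    by (cases "even n")
      (auto simp: fps_even_part_def fps_odd_part_def fps_mult_nth
        simp flip: sum.distrib intro!: sum.cong sum.neutral)
qed

lemma fps_odd_part_mult:
  "fps_odd_part (F * G) = fps_even_part F * fps_odd_part G + fps_odd_part F * fps_even_part G"
    (is "?L = ?R")
proof (rule fps_ext)
  show "?L $ n = ?R $ n" for n
    by (cases "even n")
      (auto simp: fps_even_part_def fps_odd_part_def fps_mult_nth
        simp flip: sum.distrib intro!: sum.cong sum.neutral)
qed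

lemma fps_even_part_cos [simp]: "fps_even_part (fps_cos c) = fps_cos c"
  and fps_odd_part_cos [simp]: "fps_odd_part (fps_cos c) = 0"
  and fps_even_part_sin [simp]: "fps_even_part (fps_sin c) = 0"
  and fps_odd_part_sin [simp]: "fps_odd_part (fps_sin c) = fps_sin c"
  by (simp_all add: fps_eq_iff fps_even_part_def fps_odd_part_def fps_cos_def fps_sin_def)

lemma fps_even_part_1 [simp]: "fps_even_part 1 = 1"
  and fps_odd_part_1 [simp]: "fps_odd_part 1 = 0"
  by (simp_all add: fps_eq_iff fps_even_part_def fps_odd_part_def)

lemma double_boustrophedon_fps:
  fixes A X Y :: "'a::field_char_0 fps"
  assumes X: "X * fps_cos 1 = (fps_even_part A + fps_odd_part Y) * (1 + fps_sin 1)"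
    and Y: "Y * fps_cos 1 = (fps_even_part X + fps_odd_part A) * (1 + fps_sin 1)"
  shows "(fps_even_part X + fps_odd_part Y) * (fps_cos 1 - fps_sin 1) = A"
    and "(fps_even_part Y + fps_odd_part X) * (fps_cos 1 - fps_sin 1) =
      (fps_cos 1 + fps_sin 1) * A"
proof -
  let ?c = "fps_cos (1::'a)" and ?s = "fps_sin (1::'a)"
  let ?E = fps_even_part and ?O = fps_odd_part
  define M where "M = ?E X + ?O Y"
  define B where "B = ?E Y + ?O X"
  note parts = fps_even_part_mult fps_odd_part_mult fps_even_part_add fps_odd_part_add
  have EX: "?E X * ?c = ?E A + ?O Y * ?s" and OX: "?O X * ?c = ?O Y + ?E A * ?s"
    using arg_cong[OF X, of ?E] arg_cong[OF X, of ?O] by (simp_all add: parts algebra_simps)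
  have EY: "?E Y * ?c = ?E X + ?O A * ?s" and OY: "?O Y * ?c = ?O A + ?E X * ?s"
    using arg_cong[OF Y, of ?E] arg_cong[OF Y, of ?O] by (simp_all add: parts algebra_simps)
  have "M * ?c = (?E A + ?O A) + M * ?s"
    using EX OY by (simp add: M_def algebra_simps)
  then show M: "M * (?c - ?s) = A"
    by (simp add: fps_even_part_plus_odd_part algebra_simps)
  have "B * ?c = M + (?E A + ?O A) * ?s"
    using EY OX by (simp add: M_def B_def algebra_simps)
  then have Bc: "B * ?c = M + A * ?s"
    by (simp only: fps_even_part_plus_odd_part)
  have "B * (?c - ?s) * ?c = (B * ?c) * (?c - ?s)"
    by (simp only: mult_ac)
  also have "\<dots> = M * (?c - ?s) + A * ?s * (?c - ?s)"
    unfolding Bc by (simp only: distrib_right)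
  also have "\<dots> = A + A * ?s * (?c - ?s)"
    unfolding M ..
  also have "\<dots> = A * (?c\<^sup>2 + ?s\<^sup>2) + A * ?s * (?c - ?s)"
    by (simp add: fps_sin_cos_sum_of_squares)
  also have "\<dots> = (?c + ?s) * A * ?c"
    by (simp add: algebra_simps power2_eq_square)
  moreover have "?c \<noteq> 0"
    using fps_cos_nth_0[of "1::'a"] by (metis fps_zero_nth one_neq_zero)
  ultimately show "B * (?c - ?s) = (?c + ?s) * A"
    by simp
qed

lemma ox_L_Suc_Suc: "ox_L a (Suc n) (Suc k) = ox_L a (Suc n) k + ox_L a n (n - k)"
  and ox_R_Suc_Suc: "ox_R a (Suc n) (Suc k) = ox_R a (Suc n) k + ox_R a n (n - k)"
  by (cases "ox_rows a n"; simp add: ox_L_def ox_R_def Let_def)+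

lemma ox_L_first: "ox_L a n 0 = (if even n then a n else ox_R a n n)"
  and ox_R_first: "ox_R a n 0 = (if even n then ox_L a n n else a n)"
  by (cases n; cases "ox_rows a (n - 1)"; simp add: ox_L_def ox_R_def Let_def)+

lemma egf_eq_egf_of: "egf a = egf_of (\<lambda>n. of_int (a n))"
  by (simp add: egf_def egf_of_def)

lemma egf_of_parity_split:
  "egf_of (\<lambda>n. if even n then f n else g n) = fps_even_part (egf_of f) + fps_odd_part (egf_of g)"
  by (simp add: fps_eq_iff egf_of_def fps_even_part_def fps_odd_part_def)

theorem theorem2:
  fixes a :: "nat \<Rightarrow> int"
  shows "egf (ox_middle a) = egf a / (fps_cos 1 - fps_sin 1)
       \<and> egf (ox_transform a) = (fps_cos 1 + fps_sin 1) / (fps_cos 1 - fps_sin 1) * egf a"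
proof -
  let ?c = "fps_cos (1::real)" and ?s = "fps_sin (1::real)"
  define X where "X = egf_of (\<lambda>n. real_of_int (ox_L a n n))"
  define Y where "Y = egf_of (\<lambda>n. real_of_int (ox_R a n n))"
  note parity = egf_eq_egf_of egf_of_parity_split if_distrib X_def Y_def
  have X: "X * ?c = (fps_even_part (egf a) + fps_odd_part Y) * (1 + ?s)"
    using boustrophedon_egf[of "\<lambda>n k. real_of_int (ox_L a n k)"]
    by (simp add: ox_L_Suc_Suc ox_L_first parity)
  have Y: "Y * ?c = (fps_even_part X + fps_odd_part (egf a)) * (1 + ?s)"
    using boustrophedon_egf[of "\<lambda>n k. real_of_int (ox_R a n k)"]
    by (simp add: ox_R_Suc_Suc ox_R_first parity)
  have "egf (ox_middle a) = fps_even_part X + fps_odd_part Y"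
    by (simp add: ox_middle_def parity)
  moreover have "egf (ox_transform a) = fps_even_part Y + fps_odd_part X"
    by (simp add: ox_transform_def parity)
  moreover have "is_unit (?c - ?s)"
    by simp
  ultimately show ?thesis
    using double_boustrophedon_fps[OF X Y]
    by (metis nonzero_mult_div_cancel_right not_is_unit_0 unit_div_commute)
qed

end
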